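(* Let $d<n$, let $\sigma\in\mathbb R^{d\times n}$ have full rank $d$, $A\in\mathbb R^{n\times n}$ symmetric positive definite, $h>0$, $Z\in\mathbb R^n$, and $\xi\in\mathrm{Im}\,\sigma^{\mathrm{tr}}$. Let $\alpha'>0$ be such that $x^{\mathrm{tr}}A^{-1}x\ge\alpha'|x|^2$ for all $x\in\mathbb R^n$, and assume $|\xi|<h\sqrt{\alpha'}$ and $A^{-1}(\mathrm{Ker}\,\sigma)=\mathrm{Ker}\,\sigma$. Then $\bar\phi:=\Pi(Z)+\big(\Pi^\perp(Z)^{\mathrm{tr}}A^{-1}\Pi^\perp(Z)\big)^{1/2}\big(h^2-\xi^{\mathrm{tr}}A\xi\big)^{-1/2}A\xi$ is the unique minimizer over $\phi\in\mathrm{Im}\,\sigma^{\mathrm{tr}}$ of $F(\phi):=-\xi^{\mathrm{tr}}\phi+h\big((Z-\phi)^{\mathrm{tr}}A^{-1}(Z-\phi)\big)^{1/2}$.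
   Context: $\Pi$ and $\Pi^\perp$ denote the orthogonal projections of $\mathbb R^n$ onto $\mathrm{Im}\,\sigma^{\mathrm{tr}}$ and $\mathrm{Ker}\,\sigma$, respectively. *)

theory Defs
  imports "HOL-Analysis.Analysis"
begin

definition orth_proj :: "(real^'n) set \<Rightarrow> real^'n \<Rightarrow> real^'n" where
  "orth_proj S x = (THE p. p \<in> S \<and> (\<forall>y\<in>S. (x - p) \<bullet> y = 0))"

definition im_tr :: "real^'n^'d \<Rightarrow> (real^'n) set" where
  "im_tr \<sigma> = range (\<lambda>y. transpose \<sigma> *v y)"

definition ker :: "real^'n^'d \<Rightarrow> (real^'n) set" where
  "ker \<sigma> = {x. \<sigma> *v x = 0}"

end

theory Submission
  imports Defs
begin

text \<open>Split \<open>Z = P + Q\<close> with \<open>P = \<Pi> Z\<close> and \<open>Q = \<Pi>\<^sup>\<perp> Z\<close>, and write \<open>\<phi> = P + u\<close>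
  with \<open>u \<in> Im \<sigma>\<^sup>T\<close>. Since \<open>A\<^sup>-\<^sup>1\<close> preserves \<open>Ker \<sigma>\<close>, the cross term \<open>u\<^sup>T A\<^sup>-\<^sup>1 Q\<close>
  vanishes, so up to a constant \<open>F(P + u) = -w\<^sup>T A\<^sup>-\<^sup>1 u + h (u\<^sup>T A\<^sup>-\<^sup>1 u + r\<^sup>2)\<^sup>1\<^sup>/\<^sup>2\<close>
  with \<open>w = A \<xi>\<close> and \<open>r\<^sup>2 = Q\<^sup>T A\<^sup>-\<^sup>1 Q\<close>. This is an unconstrained problem in the inner
  product \<open>A\<^sup>-\<^sup>1\<close>; completing the square and Cauchy-Schwarz show that it is uniquely
  minimised at \<open>u = r (h\<^sup>2 - \<xi>\<^sup>T A \<xi>)\<^sup>-\<^sup>1\<^sup>/\<^sup>2 w\<close>, which lies in \<open>Im \<sigma>\<^sup>T\<close> because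
  \<open>A\<close> preserves \<open>Im \<sigma>\<^sup>T = (Ker \<sigma>)\<^sup>\<perp>\<close>. The bound \<open>|\<xi>| < h \<surd>\<alpha>'\<close> guarantees
  \<open>\<xi>\<^sup>T A \<xi> < h\<^sup>2\<close>.\<close>

definition unique_minimizer_on :: "'a set \<Rightarrow> ('a \<Rightarrow> real) \<Rightarrow> 'a \<Rightarrow> bool" where
  "unique_minimizer_on S f x \<longleftrightarrow>
     x \<in> S \<and> (\<forall>y\<in>S. f x \<le> f y) \<and> (\<forall>y\<in>S. f y \<le> f x \<longrightarrow> y = x)"

lemma unique_minimizer_on_shift:
  fixes G F :: "'a::ab_group_add \<Rightarrow> real"
  assumes "unique_minimizer_on UNIV G u" "P + u \<in> S"
    and "\<And>\<phi>. \<phi> \<in> S \<Longrightarrow> F \<phi> = c + G (\<phi> - P)"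
  shows "unique_minimizer_on S F (P + u)"
proof -
  have "F (P + u) = c + G u"
    using assms(3)[OF assms(2)] by simp
  then show ?thesis
    using assms unfolding unique_minimizer_on_def by (auto simp: algebra_simps)
qed

text \<open>Here \<open>a, N, s, M\<close> stand for \<open>w\<^sup>T B u\<close>, \<open>u\<^sup>T B u\<close>, \<open>w\<^sup>T B w\<close> and
  \<open>(u - (r/q) w)\<^sup>T B (u - (r/q) w)\<close>; the key identity is
  \<open>h\<^sup>2 (N + r\<^sup>2) - (a + r q)\<^sup>2 = (s N - a\<^sup>2) + q\<^sup>2 M\<close>.\<close>

lemma completed_square_bound:
  fixes h s q r a N M :: real
  assumes "q > 0" "h > 0" "h^2 = s + q^2" "a^2 \<le> s * N" "N \<ge> 0"
    and M: "M = N - 2 * (r / q) * a + (r / q)^2 * s" "M \<ge> 0"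
  shows "r * q \<le> - a + h * sqrt (N + r^2)"
    and "- a + h * sqrt (N + r^2) \<le> r * q \<Longrightarrow> M = 0"
proof -
  have key: "h^2 * (N + r^2) - (a + r * q)^2 = (s * N - a^2) + q^2 * M"
    using assms(1,3) M(1) by (simp add: field_simps power2_eq_square)
  have h_sqrt: "h * sqrt (N + r^2) = sqrt (h^2 * (N + r^2))"
    using assms(2) by (simp add: real_sqrt_mult)
  have "(a + r * q)^2 \<le> h^2 * (N + r^2)"
    using key assms(4) M(2) by (smt (verit) mult_nonneg_nonneg zero_le_power2)
  then have "a + r * q \<le> sqrt (h^2 * (N + r^2))"
    by (rule real_le_rsqrt)
  then show "r * q \<le> - a + h * sqrt (N + r^2)"
    using h_sqrt by linarith
  assume "- a + h * sqrt (N + r^2) \<le> r * q"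
  then have "sqrt (h^2 * (N + r^2)) \<le> a + r * q"
    using h_sqrt by linarith
  moreover have "0 \<le> h^2 * (N + r^2)"
    using assms(5) by simp
  ultimately have "(sqrt (h^2 * (N + r^2)))^2 \<le> (a + r * q)^2"
    by (intro power_mono) simp_all
  then have "h^2 * (N + r^2) \<le> (a + r * q)^2"
    using \<open>0 \<le> h^2 * (N + r^2)\<close> by simp
  then have "q^2 * M \<le> 0"
    using key assms(4) by linarith
  then show "M = 0"
    using assms(1) M(2) by (smt (verit) mult_pos_pos zero_less_power)
qed

lemma completed_square_value:
  fixes h s q r :: real
  assumes "q > 0" "h > 0" "r \<ge> 0" "h^2 = s + q^2"
  shows "- ((r / q) * s) + h * sqrt ((r / q)^2 * s + r^2) = r * q"
proof -
  have "(r / q)^2 * s + r^2 = r^2 * (s + q^2) / q^2"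
    using assms(1) by (simp add: field_simps power2_eq_square)
  also have "\<dots> = (r * h / q)^2"
    using assms(4) by (simp add: power_divide power_mult_distrib)
  finally have "sqrt ((r / q)^2 * s + r^2) = r * h / q"
    using assms by simp
  then have "- ((r / q) * s) + h * sqrt ((r / q)^2 * s + r^2) = r * (h^2 - s) / q"
    using assms(1) by (simp add: field_simps power2_eq_square)
  also have "\<dots> = r * q"
    using assms(1,4) by (simp add: power2_eq_square)
  finally show ?thesis .
qed

subsection \<open>Self-adjoint matrices and their quadratic forms\<close>

lemma symmetric_matrix_self_adjoint:
  fixes A :: "real^'n^'n"
  assumes "transpose A = A"
  shows "(A *v x) \<bullet> y = x \<bullet> (A *v y)"
  by (metis assms dot_lmul_matrix transpose_matrix_vector)

lemma positive_definite_invertible: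
  fixes A :: "real^'n^'n"
  assumes "\<forall>x. x \<noteq> 0 \<longrightarrow> x \<bullet> (A *v x) > 0"
  shows "invertible A"
proof -
  have "\<forall>x. A *v x = 0 \<longrightarrow> x = 0"
    using assms by (metis inner_zero_right less_irrefl)
  then show ?thesis
    using matrix_left_invertible_ker invertible_left_inverse by blast
qed

lemma matrix_inv_cancel:
  fixes A :: "real^'n^'n"
  assumes "invertible A"
  shows "A *v (matrix_inv A *v x) = x" and "matrix_inv A *v (A *v x) = x"
proof -
  have "A ** matrix_inv A = mat 1 \<and> matrix_inv A ** A = mat 1"
    using assms unfolding matrix_inv_def invertible_def by (rule someI_ex)
  then show "A *v (matrix_inv A *v x) = x" and "matrix_inv A *v (A *v x) = x"
    by (simp_all add: matrix_vector_mul_assoc)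
qed

lemma self_adjoint_inverse:
  fixes A B :: "real^'n^'n"
  assumes "\<And>x y. (A *v x) \<bullet> y = x \<bullet> (A *v y)"
    and "\<And>x. A *v (B *v x) = x" "\<And>x. B *v (A *v x) = x"
  shows "(B *v x) \<bullet> y = x \<bullet> (B *v y)"
  by (metis assms(1,2))

lemma quad_form_diff_scaleR:
  fixes B :: "real^'n^'n"
  assumes "\<And>x y. (B *v x) \<bullet> y = x \<bullet> (B *v y)"
  shows "(u - c *\<^sub>R v) \<bullet> (B *v (u - c *\<^sub>R v))
           = u \<bullet> (B *v u) - 2 * c * (v \<bullet> (B *v u)) + c^2 * (v \<bullet> (B *v v))"
proof -
  have "u \<bullet> (B *v v) = v \<bullet> (B *v u)"
    using assms[of v u] by (simp add: inner_commute)
  then show ?thesis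
    by (simp add: algebra_simps power2_eq_square)
qed

lemma quad_form_diff_orthogonal:
  fixes B :: "real^'n^'n"
  assumes "\<And>x y. (B *v x) \<bullet> y = x \<bullet> (B *v y)" "x \<bullet> (B *v y) = 0"
  shows "(y - x) \<bullet> (B *v (y - x)) = y \<bullet> (B *v y) + x \<bullet> (B *v x)"
proof -
  have "y \<bullet> (B *v x) = 0"
    using assms(1)[of y x] assms(2) by (simp add: inner_commute)
  then show ?thesis
    using assms(2) by (simp add: algebra_simps)
qed

lemma coercive_imp_positive_definite:
  fixes B :: "real^'n^'n"
  assumes "\<forall>x. x \<bullet> (B *v x) \<ge> \<alpha> * (norm x)^2" "\<alpha> > 0"
  shows "\<forall>x. x \<noteq> 0 \<longrightarrow> x \<bullet> (B *v x) > 0"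
proof (intro allI impI)
  fix x :: "real^'n" assume "x \<noteq> 0"
  then have "\<alpha> * (norm x)^2 > 0"
    using assms(2) by simp
  then show "x \<bullet> (B *v x) > 0"
    using assms(1) by (meson less_le_trans)
qed

lemma quad_form_nonneg:
  fixes B :: "real^'n^'n"
  assumes "\<forall>x. x \<noteq> 0 \<longrightarrow> x \<bullet> (B *v x) > 0"
  shows "x \<bullet> (B *v x) \<ge> 0"
  using assms by (cases "x = 0") auto

lemma quad_form_eq_0_iff:
  fixes B :: "real^'n^'n"
  assumes "\<forall>x. x \<noteq> 0 \<longrightarrow> x \<bullet> (B *v x) > 0"
  shows "x \<bullet> (B *v x) = 0 \<longleftrightarrow> x = 0"
  using assms by (cases "x = 0") auto

lemma quad_form_cauchy_schwarz:
  fixes B :: "real^'n^'n"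
  assumes selfadj: "\<And>x y. (B *v x) \<bullet> y = x \<bullet> (B *v y)"
    and posdef: "\<forall>x. x \<noteq> 0 \<longrightarrow> x \<bullet> (B *v x) > 0"
  shows "(w \<bullet> (B *v u))^2 \<le> (w \<bullet> (B *v w)) * (u \<bullet> (B *v u))"
proof (cases "w = 0")
  case False
  define s where "s = w \<bullet> (B *v w)"
  define a where "a = w \<bullet> (B *v u)"
  have s: "s > 0"
    using posdef False unfolding s_def by blast
  have "0 \<le> (u - (a / s) *\<^sub>R w) \<bullet> (B *v (u - (a / s) *\<^sub>R w))"
    using quad_form_nonneg posdef by blast
  also have "\<dots> = u \<bullet> (B *v u) - 2 * (a / s) * a + (a / s)^2 * s"
    unfolding a_def s_def by (rule quad_form_diff_scaleR[OF selfadj])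
  also have "\<dots> = u \<bullet> (B *v u) - a^2 / s"
    using s by (simp add: field_simps power2_eq_square)
  finally show ?thesis
    using s unfolding a_def s_def by (simp add: field_simps)
qed simp

lemma quad_form_sqrt_unique_minimizer:
  fixes B :: "real^'n^'n"
  assumes selfadj: "\<And>x y. (B *v x) \<bullet> y = x \<bullet> (B *v y)"
    and posdef: "\<forall>x. x \<noteq> 0 \<longrightarrow> x \<bullet> (B *v x) > 0"
    and "h > 0" "r \<ge> 0" "w \<bullet> (B *v w) < h^2"
  shows "unique_minimizer_on UNIV
           (\<lambda>u. - (w \<bullet> (B *v u)) + h * sqrt (u \<bullet> (B *v u) + r^2))
           ((r / sqrt (h^2 - w \<bullet> (B *v w))) *\<^sub>R w)"
proof -
  define s where "s = w \<bullet> (B *v w)"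
  define q where "q = sqrt (h^2 - s)"
  define G where "G = (\<lambda>u. - (w \<bullet> (B *v u)) + h * sqrt (u \<bullet> (B *v u) + r^2))"
  have q: "q > 0" "h^2 = s + q^2"
    using assms(5) unfolding q_def s_def by simp_all
  have "G ((r / q) *\<^sub>R w) = - ((r / q) * s) + h * sqrt ((r / q)^2 * s + r^2)"
    unfolding G_def s_def by (simp add: matrix_vector_mult_scaleR power2_eq_square mult.assoc)
  then have at_minimizer: "G ((r / q) *\<^sub>R w) = r * q"
    using completed_square_value[OF q(1) assms(3,4) q(2)] by simp
  have "r * q \<le> G u \<and> (G u \<le> r * q \<longrightarrow> u = (r / q) *\<^sub>R w)" for u
  proof -
    define M where "M = (u - (r / q) *\<^sub>R w) \<bullet> (B *v (u - (r / q) *\<^sub>R w))"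
    have "M = u \<bullet> (B *v u) - 2 * (r / q) * (w \<bullet> (B *v u)) + (r / q)^2 * s"
      unfolding M_def s_def by (rule quad_form_diff_scaleR[OF selfadj])
    note bound = completed_square_bound[OF q(1) assms(3) q(2)
        quad_form_cauchy_schwarz[OF selfadj posdef, of w u, folded s_def]
        quad_form_nonneg[OF posdef, of u] this
        quad_form_nonneg[OF posdef, of "u - (r / q) *\<^sub>R w", folded M_def]]
    show ?thesis
      using bound quad_form_eq_0_iff[OF posdef] unfolding G_def M_def by auto
  qed
  then show ?thesis
    using at_minimizer unfolding unique_minimizer_on_def G_def q_def s_def by auto
qed

lemma quad_form_sqrt_unique_minimizer_on_subspace:
  fixes B :: "real^'n^'n"
  assumes selfadj: "\<And>x y. (B *v x) \<bullet> y = x \<bullet> (B *v y)"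
    and posdef: "\<forall>x. x \<noteq> 0 \<longrightarrow> x \<bullet> (B *v x) > 0"
    and "h > 0" "w \<bullet> (B *v w) < h^2"
    and S: "subspace S" "P \<in> S" "w \<in> S" "\<And>u. u \<in> S \<Longrightarrow> u \<bullet> (B *v Q) = 0"
  shows "unique_minimizer_on S
           (\<lambda>\<phi>. - ((B *v w) \<bullet> \<phi>) + h * sqrt ((P + Q - \<phi>) \<bullet> (B *v (P + Q - \<phi>))))
           (P + (sqrt (Q \<bullet> (B *v Q)) / sqrt (h^2 - w \<bullet> (B *v w))) *\<^sub>R w)"
proof (rule unique_minimizer_on_shift)
  show "unique_minimizer_on UNIV
      (\<lambda>u. - (w \<bullet> (B *v u)) + h * sqrt (u \<bullet> (B *v u) + (sqrt (Q \<bullet> (B *v Q)))^2))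
      ((sqrt (Q \<bullet> (B *v Q)) / sqrt (h^2 - w \<bullet> (B *v w))) *\<^sub>R w)"
    using quad_form_nonneg[OF posdef, of Q]
    by (intro quad_form_sqrt_unique_minimizer[OF selfadj posdef assms(3) _ assms(4)]) simp
  show "P + (sqrt (Q \<bullet> (B *v Q)) / sqrt (h^2 - w \<bullet> (B *v w))) *\<^sub>R w \<in> S"
    using S by (simp add: subspace_add subspace_scale)
next
  fix \<phi> assume "\<phi> \<in> S"
  then have "(\<phi> - P) \<bullet> (B *v Q) = 0"
    using S by (simp add: subspace_diff)
  then have "(P + Q - \<phi>) \<bullet> (B *v (P + Q - \<phi>)) = (\<phi> - P) \<bullet> (B *v (\<phi> - P)) + Q \<bullet> (B *v Q)"
    using quad_form_diff_orthogonal[OF selfadj, of "\<phi> - P" Q] by (simp add: algebra_simps)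
  then show "- ((B *v w) \<bullet> \<phi>) + h * sqrt ((P + Q - \<phi>) \<bullet> (B *v (P + Q - \<phi>)))
      = - ((B *v w) \<bullet> P) + (- (w \<bullet> (B *v (\<phi> - P)))
          + h * sqrt ((\<phi> - P) \<bullet> (B *v (\<phi> - P)) + (sqrt (Q \<bullet> (B *v Q)))^2))"
    using quad_form_nonneg[OF posdef, of Q] selfadj[of w "\<phi> - P"]
    by (simp add: inner_diff_right)
qed

lemma quad_form_inverse_less:
  fixes A B :: "real^'n^'n"
  assumes "\<forall>x. x \<bullet> (B *v x) \<ge> \<alpha> * (norm x)^2" "\<alpha> > 0"
    and "B *v (A *v \<xi>) = \<xi>" "norm \<xi> < h * sqrt \<alpha>"
  shows "\<xi> \<bullet> (A *v \<xi>) < h^2"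
proof -
  define w where "w = A *v \<xi>"
  define s where "s = \<xi> \<bullet> w"
  have "w \<bullet> (B *v w) = s"
    using assms(3) unfolding s_def w_def by (simp add: inner_commute)
  then have lower: "\<alpha> * (norm w)^2 \<le> s"
    using assms(1) by metis
  have upper: "s \<le> norm \<xi> * norm w"
    unfolding s_def by (rule norm_cauchy_schwarz)
  have "\<alpha> * norm w \<le> norm \<xi>"
  proof (cases "w = 0")
    case False
    have "(\<alpha> * norm w) * norm w \<le> norm \<xi> * norm w"
      using lower upper by (simp add: power2_eq_square mult.assoc)
    then show ?thesis
      by (rule mult_right_le_imp_le) (simp add: False)
  qed simp
  have "s * \<alpha> \<le> (norm \<xi> * norm w) * \<alpha>"
    using upper assms(2) by simp
  also have "\<dots> = norm \<xi> * (\<alpha> * norm w)"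
    by (simp add: ac_simps)
  also have "\<dots> \<le> (norm \<xi>)^2"
    using \<open>\<alpha> * norm w \<le> norm \<xi>\<close> by (simp add: power2_eq_square mult_left_mono)
  also have "\<dots> < (h * sqrt \<alpha>)^2"
    using assms(4) by (simp add: power_strict_mono)
  also have "\<dots> = h^2 * \<alpha>"
    using assms(2) by (simp add: power_mult_distrib)
  finally show ?thesis
    using assms(2) unfolding s_def w_def by simp
qed

subsection \<open>The subspaces \<open>Im \<sigma>\<^sup>T\<close> and \<open>Ker \<sigma>\<close>\<close>

lemma subspace_im_tr: "subspace (im_tr \<sigma>)"
  unfolding im_tr_def by (rule linear_subspace_image[OF matrix_vector_mul_linear subspace_UNIV])

lemma subspace_ker: "subspace (ker \<sigma>)"
  unfolding ker_def subspace_def by (simp add: matrix_vector_right_distrib matrix_vector_mult_scaleR)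

lemma im_tr_orthogonal_ker:
  assumes "x \<in> im_tr \<sigma>" "k \<in> ker \<sigma>"
  shows "x \<bullet> k = 0"
proof -
  obtain y where "x = transpose \<sigma> *v y"
    using assms(1) unfolding im_tr_def by auto
  then have "x \<bullet> k = y \<bullet> (\<sigma> *v k)"
    by (simp add: dot_lmul_matrix)
  then show ?thesis
    using assms(2) unfolding ker_def by simp
qed

lemma orthogonal_im_tr_imp_ker:
  assumes "\<forall>x\<in>im_tr \<sigma>. z \<bullet> x = 0"
  shows "z \<in> ker \<sigma>"
proof -
  have "z \<bullet> (transpose \<sigma> *v (\<sigma> *v z)) = 0"
    using assms unfolding im_tr_def by blast
  moreover have "z \<bullet> (transpose \<sigma> *v (\<sigma> *v z)) = (\<sigma> *v z) \<bullet> (\<sigma> *v z)"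
    by (simp add: inner_commute[of z] dot_lmul_matrix)
  ultimately show ?thesis
    unfolding ker_def by simp
qed

lemma im_tr_ker_decomp: "\<exists>p\<in>im_tr \<sigma>. v - p \<in> ker \<sigma>"
proof -
  have span: "span (im_tr \<sigma>) = im_tr \<sigma>"
    using subspace_im_tr by simp
  obtain y z where "y \<in> span (im_tr \<sigma>)" "\<And>x. x \<in> span (im_tr \<sigma>) \<Longrightarrow> orthogonal z x"
    "v = y + z"
    using orthogonal_subspace_decomp_exists by blast
  then show ?thesis
    using orthogonal_im_tr_imp_ker span unfolding orthogonal_def by (intro bexI[of _ y]) auto
qed

lemma orthogonal_ker_imp_im_tr:
  assumes "\<forall>k\<in>ker \<sigma>. v \<bullet> k = 0"
  shows "v \<in> im_tr \<sigma>"
proof -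
  obtain p where p: "p \<in> im_tr \<sigma>" "v - p \<in> ker \<sigma>"
    using im_tr_ker_decomp by blast
  then have "(v - p) \<bullet> (v - p) = 0"
    using assms im_tr_orthogonal_ker by (simp add: inner_diff_left)
  then show ?thesis
    using p by simp
qed

lemma orth_proj_eqI:
  fixes S :: "(real^'n) set"
  assumes "subspace S" "p \<in> S" "\<forall>y\<in>S. (x - p) \<bullet> y = 0"
  shows "orth_proj S x = p"
  unfolding orth_proj_def
proof (rule the_equality)
  show "p \<in> S \<and> (\<forall>y\<in>S. (x - p) \<bullet> y = 0)"
    using assms by blast
next
  fix q assume q: "q \<in> S \<and> (\<forall>y\<in>S. (x - q) \<bullet> y = 0)"
  have "(p - q) \<bullet> (p - q) = (x - q) \<bullet> (p - q) - (x - p) \<bullet> (p - q)"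
    by (simp add: algebra_simps)
  also have "\<dots> = 0"
    using assms q by (simp add: subspace_diff)
  finally show "q = p" by simp
qed

lemma orth_proj_im_tr_ker:
  "orth_proj (im_tr \<sigma>) Z \<in> im_tr \<sigma> \<and> orth_proj (ker \<sigma>) Z \<in> ker \<sigma>
     \<and> orth_proj (im_tr \<sigma>) Z + orth_proj (ker \<sigma>) Z = Z"
proof -
  obtain P where P: "P \<in> im_tr \<sigma>" "Z - P \<in> ker \<sigma>"
    using im_tr_ker_decomp by blast
  have "\<forall>y\<in>im_tr \<sigma>. (Z - P) \<bullet> y = 0"
    using im_tr_orthogonal_ker[OF _ P(2)] inner_commute by metis
  then have "orth_proj (im_tr \<sigma>) Z = P"
    by (rule orth_proj_eqI[OF subspace_im_tr P(1)])
  moreover have "\<forall>y\<in>ker \<sigma>. (Z - (Z - P)) \<bullet> y = 0"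
    using P(1) by (simp add: im_tr_orthogonal_ker)
  then have "orth_proj (ker \<sigma>) Z = Z - P"
    by (rule orth_proj_eqI[OF subspace_ker P(2)])
  ultimately show ?thesis
    using P by simp
qed

lemma im_tr_invariant_inverse:
  fixes A B :: "real^'n^'n"
  assumes "(\<lambda>x. B *v x) ` ker \<sigma> = ker \<sigma>"
    and "\<And>x y. (A *v x) \<bullet> y = x \<bullet> (A *v y)" "\<And>x. A *v (B *v x) = x"
    and "\<xi> \<in> im_tr \<sigma>"
  shows "A *v \<xi> \<in> im_tr \<sigma>"
proof (rule orthogonal_ker_imp_im_tr, intro ballI)
  fix k assume "k \<in> ker \<sigma>"
  then obtain k' where "k' \<in> ker \<sigma>" "k = B *v k'"
    using assms(1) by blast
  then show "(A *v \<xi>) \<bullet> k = 0"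
    using assms(2-4) im_tr_orthogonal_ker by simp
qed

theorem lemma5p1:
  fixes \<sigma> :: "real^'n^'d" and A :: "real^'n^'n" and h \<alpha>' :: real
    and Z \<xi> :: "real^'n"
  assumes "CARD('d) < CARD('n)"
    and "rank \<sigma> = CARD('d)"
    and "transpose A = A"
    and "\<forall>x. x \<noteq> 0 \<longrightarrow> x \<bullet> (A *v x) > 0"
    and "h > 0"
    and "\<xi> \<in> im_tr \<sigma>"
    and "\<alpha>' > 0"
    and "\<forall>x. x \<bullet> (matrix_inv A *v x) \<ge> \<alpha>' * (norm x)^2"
    and "norm \<xi> < h * sqrt \<alpha>'"
    and "(\<lambda>x. matrix_inv A *v x) ` ker \<sigma> = ker \<sigma>"
  shows
    "let F = (\<lambda>\<phi>. - (\<xi> \<bullet> \<phi>) + h * sqrt ((Z - \<phi>) \<bullet> (matrix_inv A *v (Z - \<phi>))));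
         Pp = orth_proj (ker \<sigma>) Z;
         \<phi>b = orth_proj (im_tr \<sigma>) Z
               + (sqrt (Pp \<bullet> (matrix_inv A *v Pp)) / sqrt (h^2 - \<xi> \<bullet> (A *v \<xi>))) *\<^sub>R (A *v \<xi>)
     in \<phi>b \<in> im_tr \<sigma> \<and> (\<forall>\<phi>\<in>im_tr \<sigma>. F \<phi>b \<le> F \<phi>)
        \<and> (\<forall>\<phi>\<in>im_tr \<sigma>. F \<phi> \<le> F \<phi>b \<longrightarrow> \<phi> = \<phi>b)"
proof -
  define B where "B = matrix_inv A"
  define P where "P = orth_proj (im_tr \<sigma>) Z"
  define Q where "Q = orth_proj (ker \<sigma>) Z"
  have cancel: "\<And>x. A *v (B *v x) = x" "\<And>x. B *v (A *v x) = x"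
    unfolding B_def using matrix_inv_cancel positive_definite_invertible assms(4) by blast+
  have A_selfadj: "\<And>x y. (A *v x) \<bullet> y = x \<bullet> (A *v y)"
    using symmetric_matrix_self_adjoint[OF assms(3)] .
  note B_selfadj = self_adjoint_inverse[OF A_selfadj cancel]
  have B_posdef: "\<forall>x. x \<noteq> 0 \<longrightarrow> x \<bullet> (B *v x) > 0"
    using coercive_imp_positive_definite assms(7,8) unfolding B_def by blast
  have PQ: "P \<in> im_tr \<sigma>" "Z = P + Q" "Q \<in> ker \<sigma>"
    using orth_proj_im_tr_ker[of \<sigma> Z] unfolding P_def Q_def by auto
  have "u \<bullet> (B *v Q) = 0" if "u \<in> im_tr \<sigma>" for u
    using im_tr_orthogonal_ker[OF that] PQ(3) assms(10) unfolding B_def by blast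
  moreover have "(A *v \<xi>) \<bullet> (B *v (A *v \<xi>)) < h^2"
    using quad_form_inverse_less[OF assms(8,7) _ assms(9)] cancel(2) unfolding B_def
    by (simp add: inner_commute)
  ultimately have "unique_minimizer_on (im_tr \<sigma>)
      (\<lambda>\<phi>. - ((B *v (A *v \<xi>)) \<bullet> \<phi>) + h * sqrt ((P + Q - \<phi>) \<bullet> (B *v (P + Q - \<phi>))))
      (P + (sqrt (Q \<bullet> (B *v Q)) / sqrt (h^2 - (A *v \<xi>) \<bullet> (B *v (A *v \<xi>)))) *\<^sub>R (A *v \<xi>))"
    using quad_form_sqrt_unique_minimizer_on_subspace[OF B_selfadj B_posdef assms(5) _
        subspace_im_tr PQ(1) im_tr_invariant_inverse[OF _ A_selfadj cancel(1) assms(6)]]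
      assms(10) unfolding B_def by blast
  then show ?thesis
    unfolding unique_minimizer_on_def Let_def PQ(2)[symmetric] cancel(2)
    by (simp add: P_def Q_def B_def inner_commute)
qed

end
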